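(* Let $G$, $k$, $\epsilon$, $M$ be as in the standing setting, and let $V_1$ and $T$ be as defined in the context. Then: (i) every vertex of $V_1$ has exactly one neighbor of degree at least $k-M$, and all its other neighbors have degree $2$; (ii) $V_1$ is a stable set in $G$; (iii) $V_1\cap T=\emptyset$.
   Context: Standing setting: let $0<\epsilon\le 1/20$, $M=6/\epsilon$, and let $k$ be an integer with $k\ge 3/\epsilon^2$ (so $k\ge 3M$). Let $G$ be a finite simple graph with $\Delta(G)\le k$ such that the square of $G$ is not list $(k+1)$-colorable, while the square of every proper subgraph of $G$ is list $(k+1)$-colorable. Here the square of a graph has the same vertex set, two distinct vertices being adjacent iff they are adjacent or have a common neighbor; it is list $(k+1)$-colorable if for every assignment of lists of $k+1$ colors to the vertices there is a proper coloring of the square from the lists. $d(v)$ denotes the degree of $v$ in $G$. Definitions: $V_1$ is the smallest set of vertices of $G$ with the following property: every vertex $u$ with $d(u)\le M-1$ that has $d(u)-1$ neighbors $v_1,\dots,v_{d(u)-1}$, all of degree $2$, such that the other neighbor of each of $v_2,\dots,v_{d(u)-1}$ belongs to $V_1$ and the other neighbor of $v_1$ has degree at most $M-1$ (not necessarily in $V_1$), belongs to $V_1$. $T$ is the set of vertices of degree $2$ both of whose neighbors lie in $V_1$. *)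

theory Defs
  imports Complex_Main
begin

definition simple_graph :: "'a set \<Rightarrow> ('a \<Rightarrow> 'a \<Rightarrow> bool) \<Rightarrow> bool" where
  "simple_graph V E \<longleftrightarrow> finite V \<and> (\<forall>u v. E u v \<longrightarrow> u \<in> V \<and> v \<in> V)
     \<and> (\<forall>u v. E u v \<longrightarrow> E v u) \<and> (\<forall>u. \<not> E u u)"

definition deg :: "'a set \<Rightarrow> ('a \<Rightarrow> 'a \<Rightarrow> bool) \<Rightarrow> 'a \<Rightarrow> nat" where
  "deg V E v = card {u \<in> V. E v u}"

definition sq_adj :: "('a \<Rightarrow> 'a \<Rightarrow> bool) \<Rightarrow> 'a \<Rightarrow> 'a \<Rightarrow> bool" where
  "sq_adj E u v \<longleftrightarrow> u \<noteq> v \<and> (E u v \<or> (\<exists>w. E u w \<and> E w v))"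

definition sq_list_colorable :: "'a set \<Rightarrow> ('a \<Rightarrow> 'a \<Rightarrow> bool) \<Rightarrow> nat \<Rightarrow> bool" where
  "sq_list_colorable V E n \<longleftrightarrow>
     (\<forall>L :: 'a \<Rightarrow> nat set. (\<forall>v\<in>V. finite (L v) \<and> card (L v) = n) \<longrightarrow>
        (\<exists>c. (\<forall>v\<in>V. c v \<in> L v) \<and> (\<forall>u\<in>V. \<forall>v\<in>V. sq_adj E u v \<longrightarrow> c u \<noteq> c v)))"

definition proper_subgraph ::
  "'a set \<Rightarrow> ('a \<Rightarrow> 'a \<Rightarrow> bool) \<Rightarrow> 'a set \<Rightarrow> ('a \<Rightarrow> 'a \<Rightarrow> bool) \<Rightarrow> bool" where
  "proper_subgraph V' E' V E \<longleftrightarrow> simple_graph V' E' \<and> V' \<subseteq> V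
     \<and> (\<forall>u v. E' u v \<longrightarrow> E u v) \<and> (V', E') \<noteq> (V, E)"

text \<open>A vertex u with d(u) \<le> M-1 enters V_1 if it has d(u)-1 distinct neighbours
  v_1 (here v1) and v_2..v_{d(u)-1} (here the set S, with card S = d(u)-2), all of
  degree 2, such that the other neighbour of every vertex in S is in V_1 and the other
  neighbour of v1 has degree at most M-1.\<close>
inductive_set V1set :: "'a set \<Rightarrow> ('a \<Rightarrow> 'a \<Rightarrow> bool) \<Rightarrow> real \<Rightarrow> 'a set"
  for V E M where
  "\<lbrakk> u \<in> V; real (deg V E u) \<le> M - 1; 2 \<le> deg V E u;
     E u v1; v1 \<notin> S; finite S; card S = deg V E u - 2; \<forall>w\<in>S. E u w;
     deg V E v1 = 2; \<forall>w\<in>S. deg V E w = 2;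
     \<forall>x. E v1 x \<and> x \<noteq> u \<longrightarrow> real (deg V E x) \<le> M - 1;
     \<forall>w\<in>S. \<forall>x. E w x \<and> x \<noteq> u \<longrightarrow> x \<in> V1set V E M \<rbrakk>
   \<Longrightarrow> u \<in> V1set V E M"

definition Tset :: "'a set \<Rightarrow> ('a \<Rightarrow> 'a \<Rightarrow> bool) \<Rightarrow> real \<Rightarrow> 'a set" where
  "Tset V E M = {v \<in> V. deg V E v = 2 \<and> (\<forall>x. E v x \<longrightarrow> x \<in> V1set V E M)}"

end

theory Submission
  imports Defs
begin

text \<open>The defining rule gives all neighbours of \<open>u\<close> but one, say \<open>w\<^sub>0\<close>, degree 2
  and only light neighbours (degree \<open>\<le> M - 1\<close>), so in the square of \<open>G\<close> each of them has at most
  \<open>2M \<le> k\<close> neighbours. If \<open>w\<^sub>0\<close> were light too, delete \<open>u\<close> and these degree-2 neighbours: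
  every deleted vertex has at most one neighbour left, so a list colouring of the square of
  the rest (which exists by minimality) stays proper in \<open>G\<^sup>2\<close>; \<open>u\<close> then sees at most
  \<open>d(w\<^sub>0) + d(u) < k\<close> coloured vertices and the degree-2 vertices at most \<open>2M\<close>, so the colouring
  extends greedily, a contradiction. Hence \<open>w\<^sub>0\<close> is heavy, which is (i). An edge inside \<open>V\<^sub>1\<close>
  would join a light vertex \<open>v\<close> to \<open>u\<close>, making \<open>v\<close> a degree-2 neighbour of \<open>u\<close>, whose neighbours
  are all light, yet \<open>v\<close> has a heavy neighbour by (i); and a vertex of \<open>V\<^sub>1 \<inter> T\<close> would have
  its heavy neighbour in \<open>V\<^sub>1\<close>.\<close>

definition sq_list_coloring ::
  "'a set \<Rightarrow> ('a \<Rightarrow> 'a \<Rightarrow> bool) \<Rightarrow> ('a \<Rightarrow> nat set) \<Rightarrow> ('a \<Rightarrow> nat) \<Rightarrow> bool" where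
  "sq_list_coloring U E L c \<longleftrightarrow>
     (\<forall>v\<in>U. c v \<in> L v) \<and> (\<forall>a\<in>U. \<forall>b\<in>U. sq_adj E a b \<longrightarrow> c a \<noteq> c b)"

lemma sq_list_colorable_iff:
  "sq_list_colorable V E n \<longleftrightarrow>
     (\<forall>L. (\<forall>v\<in>V. finite (L v) \<and> card (L v) = n) \<longrightarrow> (\<exists>c. sq_list_coloring V E L c))"
  unfolding sq_list_colorable_def sq_list_coloring_def ..

lemma simple_graph_sym: "simple_graph V E \<Longrightarrow> E u v \<Longrightarrow> E v u"
  by (simp add: simple_graph_def)

lemma simple_graph_vertices: "simple_graph V E \<Longrightarrow> E u v \<Longrightarrow> u \<in> V \<and> v \<in> V"
  by (simp add: simple_graph_def)

lemma simple_graph_finite: "simple_graph V E \<Longrightarrow> finite V"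
  by (simp add: simple_graph_def)

lemma sq_adj_sym: "(\<And>u v. E u v \<Longrightarrow> E v u) \<Longrightarrow> sq_adj E a b \<Longrightarrow> sq_adj E b a"
  unfolding sq_adj_def by blast

lemma sq_list_coloring_insert:
  assumes sym: "\<And>u v. E u v \<Longrightarrow> E v u"
    and c: "sq_list_coloring U E L c" and "finite U" and "finite (L x)"
    and few: "card {y\<in>U. sq_adj E x y} < card (L x)"
  obtains col where "sq_list_coloring (insert x U) E L (c(x := col))"
proof -
  let ?N = "{y\<in>U. sq_adj E x y}"
  have "card (c ` ?N) < card (L x)"
    using few card_image_le[of ?N c] \<open>finite U\<close> by fastforce
  then have "\<not> L x \<subseteq> c ` ?N"
    using card_mono[of "c ` ?N" "L x"] \<open>finite U\<close> by fastforce
  then obtain col where col: "col \<in> L x" "col \<notin> c ` ?N" by blast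
  have "(c(x := col)) a \<noteq> (c(x := col)) b"
    if "a \<in> insert x U" "b \<in> insert x U" "sq_adj E a b" for a b
  proof -
    have "a \<noteq> b" using \<open>sq_adj E a b\<close> by (simp add: sq_adj_def)
    moreover have "sq_adj E b a" using sq_adj_sym[of E, OF sym \<open>sq_adj E a b\<close>] .
    ultimately show ?thesis
      using that c col unfolding sq_list_coloring_def by (cases "a = x"; cases "b = x") auto
  qed
  then have "sq_list_coloring (insert x U) E L (c(x := col))"
    using c col unfolding sq_list_coloring_def by auto
  then show ?thesis by (rule that)
qed

lemma sq_list_coloring_Un:
  assumes sym: "\<And>u v. E u v \<Longrightarrow> E v u"
    and "finite V" "U \<subseteq> V" "Z \<subseteq> V"
    and L: "\<forall>x\<in>Z. finite (L x) \<and> card {y\<in>V. sq_adj E x y} < card (L x)"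
    and c: "sq_list_coloring U E L c"
  shows "\<exists>c'. sq_list_coloring (U \<union> Z) E L c'"
proof -
  have "finite Z" using \<open>finite V\<close> \<open>Z \<subseteq> V\<close> by (rule finite_subset[rotated])
  then show ?thesis using \<open>Z \<subseteq> V\<close> L
  proof (induction Z rule: finite_induct)
    case empty
    then show ?case using c by auto
  next
    case (insert x Z)
    then obtain c' where c': "sq_list_coloring (U \<union> Z) E L c'" by auto
    have "card {y\<in>U \<union> Z. sq_adj E x y} \<le> card {y\<in>V. sq_adj E x y}"
      by (rule card_mono) (use insert.prems \<open>finite V\<close> \<open>U \<subseteq> V\<close> in auto)
    also have "\<dots> < card (L x)" using insert.prems by simp
    finally have few: "card {y\<in>U \<union> Z. sq_adj E x y} < card (L x)" .
    have "finite (U \<union> Z)" using \<open>finite V\<close> \<open>U \<subseteq> V\<close> \<open>finite Z\<close> finite_subset by blast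
    then obtain col where "sq_list_coloring (insert x (U \<union> Z)) E L (c'(x := col))"
      using sq_list_coloring_insert[OF sym c' _ _ few] insert.prems by blast
    then show ?case by auto
  qed
qed

lemma sq_adj_avoiding:
  assumes sym: "\<And>u v. E u v \<Longrightarrow> E v u"
    and one_out: "\<forall>w\<in>X. \<forall>a b. E w a \<longrightarrow> E w b \<longrightarrow> a \<notin> X \<longrightarrow> b \<notin> X \<longrightarrow> a = b"
    and "a \<notin> X" "b \<notin> X" "sq_adj E a b"
  shows "sq_adj (\<lambda>x y. E x y \<and> x \<notin> X \<and> y \<notin> X) a b"
  using assms unfolding sq_adj_def by blast

lemma sq_list_coloring_remainder:
  assumes G: "simple_graph V E"
    and minimal: "\<forall>V' E'. proper_subgraph V' E' V E \<longrightarrow> sq_list_colorable V' E' n"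
    and "u \<in> X" "u \<in> V"
    and one_out: "\<forall>w\<in>X. \<forall>a b. E w a \<longrightarrow> E w b \<longrightarrow> a \<notin> X \<longrightarrow> b \<notin> X \<longrightarrow> a = b"
    and L: "\<forall>v\<in>V. finite (L v) \<and> card (L v) = n"
  obtains c where "sq_list_coloring (V - X) E L c"
proof -
  define E' where "E' = (\<lambda>a b. E a b \<and> a \<notin> X \<and> b \<notin> X)"
  have "proper_subgraph (V - X) E' V E"
    using G \<open>u \<in> X\<close> \<open>u \<in> V\<close> unfolding proper_subgraph_def simple_graph_def E'_def by auto
  then obtain c where "sq_list_coloring (V - X) E' L c"
    using minimal L unfolding sq_list_colorable_iff by (meson DiffD1)
  then have "sq_list_coloring (V - X) E L c"
    using sq_adj_avoiding[OF simple_graph_sym[OF G] one_out]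
    unfolding sq_list_coloring_def E'_def by blast
  then show ?thesis by (rule that)
qed

lemma card_sq_neighbours_le:
  assumes G: "simple_graph V E"
  shows "card {y\<in>V. sq_adj E t y} \<le> deg V E t + (\<Sum>w\<in>{y\<in>V. E t y}. deg V E w)"
proof -
  have fin: "finite V" using G by (rule simple_graph_finite)
  let ?N = "{y\<in>V. E t y}"
  have "{y\<in>V. sq_adj E t y} \<subseteq> ?N \<union> (\<Union>w\<in>?N. {y\<in>V. E w y})"
    using simple_graph_vertices[OF G] unfolding sq_adj_def by blast
  then have "card {y\<in>V. sq_adj E t y} \<le> card (?N \<union> (\<Union>w\<in>?N. {y\<in>V. E w y}))"
    by (rule card_mono[rotated]) (use fin in auto)
  also have "\<dots> \<le> card ?N + card (\<Union>w\<in>?N. {y\<in>V. E w y})" by (rule card_Un_le)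
  also have "card (\<Union>w\<in>?N. {y\<in>V. E w y}) \<le> (\<Sum>w\<in>?N. card {y\<in>V. E w y})"
    by (rule card_UN_le) (use fin in auto)
  finally show ?thesis by (simp add: deg_def)
qed

lemma card_sq_neighbours_deg2:
  assumes G: "simple_graph V E" and "deg V E t = 2"
    and light: "\<forall>w. E t w \<longrightarrow> real (deg V E w) \<le> M - 1"
  shows "real (card {y\<in>V. sq_adj E t y}) \<le> 2 * M"
proof -
  have "real (card {y\<in>V. sq_adj E t y}) \<le> real (deg V E t) + (\<Sum>w\<in>{y\<in>V. E t y}. real (deg V E w))"
    using card_sq_neighbours_le[OF G, of t] by (simp flip: of_nat_sum)
  also have "(\<Sum>w\<in>{y\<in>V. E t y}. real (deg V E w)) \<le> real (card {y\<in>V. E t y}) * (M - 1)"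
    using sum_bounded_above[of "{y\<in>V. E t y}" "\<lambda>w. real (deg V E w)" "M - 1"] light by auto
  also have "real (card {y\<in>V. E t y}) = 2" using \<open>deg V E t = 2\<close> by (simp add: deg_def)
  finally show ?thesis using \<open>deg V E t = 2\<close> by simp
qed

lemma deg2_other_neighbour:
  assumes G: "simple_graph V E" and "deg V E t = 2" and "E t u"
  obtains z where "{y\<in>V. E t y} - {u} = {z}"
proof -
  have "u \<in> {y\<in>V. E t y}" using simple_graph_vertices[OF G \<open>E t u\<close>] \<open>E t u\<close> by simp
  then have "card ({y\<in>V. E t y} - {u}) = 1"
    using \<open>deg V E t = 2\<close> by (simp add: deg_def)
  then show ?thesis using that by (rule card_1_singletonE)
qed

lemma card_sq_neighbours_beyond_deg2:
  assumes G: "simple_graph V E"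
    and N: "{y\<in>V. E u y} = insert w0 A" "w0 \<notin> A"
    and A: "\<forall>t\<in>A. deg V E t = 2"
  shows "card {y\<in>V - insert u A. sq_adj E u y} \<le> deg V E w0 + deg V E u"
proof -
  have fin: "finite V" using G by (rule simple_graph_finite)
  have finA: "finite A"
    using finite_subset[OF _ fin, of "{y\<in>V. E u y}"] N(1) by auto
  let ?O = "\<lambda>t. {y\<in>V. E t y} - {u}"
  have card_O: "card (?O t) = 1" if "t \<in> A" for t
  proof -
    have "t \<in> {y\<in>V. E u y}" using that N(1) by blast
    then have "E u t" by simp
    then have "E t u" by (rule simple_graph_sym[OF G])
    moreover have "deg V E t = 2" using A that by blast
    ultimately obtain z where "?O t = {z}" using deg2_other_neighbour[OF G] by metis
    then show ?thesis by simp
  qed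
  have sub: "{y\<in>V - insert u A. sq_adj E u y} \<subseteq> insert w0 ({y\<in>V. E w0 y} \<union> (\<Union>t\<in>A. ?O t))"
  proof
    fix y assume y: "y \<in> {y\<in>V - insert u A. sq_adj E u y}"
    then obtain w where "E u w" "E w y \<or> w = y" and "y \<noteq> u" "y \<notin> A" "y \<in> V"
      unfolding sq_adj_def by blast
    moreover have "w = w0 \<or> w \<in> A" using \<open>E u w\<close> N(1) simple_graph_vertices[OF G] by blast
    ultimately show "y \<in> insert w0 ({y\<in>V. E w0 y} \<union> (\<Union>t\<in>A. ?O t))" by blast
  qed
  have "card {y\<in>V - insert u A. sq_adj E u y} \<le> card (insert w0 ({y\<in>V. E w0 y} \<union> (\<Union>t\<in>A. ?O t)))"
    by (rule card_mono[OF _ sub]) (use fin finA in auto)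
  also have "\<dots> \<le> Suc (card ({y\<in>V. E w0 y} \<union> (\<Union>t\<in>A. ?O t)))"
    using fin finA by (simp add: card_insert_if)
  also have "\<dots> \<le> Suc (card {y\<in>V. E w0 y} + card (\<Union>t\<in>A. ?O t))"
    using card_Un_le by simp
  also have "card (\<Union>t\<in>A. ?O t) \<le> (\<Sum>t\<in>A. card (?O t))"
    by (rule card_UN_le[OF finA])
  also have "(\<Sum>t\<in>A. card (?O t)) = card A" using card_O by simp
  finally show ?thesis using N finA by (simp add: deg_def)
qed

lemma V1set_vertex:
  assumes "u \<in> V1set V E M"
  shows "u \<in> V" "real (deg V E u) \<le> M - 1"
  using assms by (cases rule: V1set.cases; simp)+

lemma V1set_neighbourhood:
  assumes G: "simple_graph V E" and u: "u \<in> V1set V E M"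
  obtains w0 A where "{y\<in>V. E u y} = insert w0 A" "w0 \<notin> A"
    "\<forall>t\<in>A. deg V E t = 2 \<and> (\<forall>x. E t x \<longrightarrow> real (deg V E x) \<le> M - 1)"
  using u
proof (cases rule: V1set.cases)
  case (1 v1 S)
  let ?N = "{y\<in>V. E u y}"
  define A where "A = insert v1 S"
  have finN: "finite ?N" using simple_graph_finite[OF G] by simp
  have AN: "A \<subseteq> ?N" using 1 simple_graph_vertices[OF G] by (auto simp: A_def)
  have "card ?N = card A + 1" using 1 by (simp add: deg_def A_def)
  then have "card (?N - A) = 1"
    using card_Diff_subset[OF finite_subset[OF AN finN] AN] by simp
  then obtain w0 where w0: "?N - A = {w0}" by (rule card_1_singletonE)
  have "?N = insert w0 A" using w0 AN by blast
  moreover have "w0 \<notin> A" using w0 by blast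
  moreover have "real (deg V E x) \<le> M - 1" if "t \<in> A" "E t x" for t x
  proof (cases "x = u")
    case True
    then show ?thesis using V1set_vertex(2)[OF u] by simp
  next
    case False
    show ?thesis
    proof (cases "t = v1")
      case True
      then show ?thesis using 1(11) \<open>E t x\<close> False by blast
    next
      case False
      then have "t \<in> S" using \<open>t \<in> A\<close> by (simp add: A_def)
      then have "x \<in> V1set V E M" using 1(12) \<open>E t x\<close> \<open>x \<noteq> u\<close> by blast
      then show ?thesis by (rule V1set_vertex(2))
    qed
  qed
  moreover have "deg V E t = 2" if "t \<in> A" for t using 1 that by (auto simp: A_def)
  ultimately show ?thesis by (intro that) auto
qed

lemma heavy_neighbour:
  assumes G: "simple_graph V E"
    and notcol: "\<not> sq_list_colorable V E (k + 1)"
    and minimal: "\<forall>V' E'. proper_subgraph V' E' V E \<longrightarrow> sq_list_colorable V' E' (k + 1)"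
    and Mk: "2 * M \<le> real k"
    and u: "u \<in> V" "real (deg V E u) \<le> M - 1"
    and N: "{y\<in>V. E u y} = insert w0 A" "w0 \<notin> A"
    and A: "\<forall>t\<in>A. deg V E t = 2 \<and> (\<forall>x. E t x \<longrightarrow> real (deg V E x) \<le> M - 1)"
  shows "real k - M \<le> real (deg V E w0)"
proof (rule ccontr)
  assume light: "\<not> real k - M \<le> real (deg V E w0)"
  define X where "X = insert u A"
  have sym: "\<And>a b. E a b \<Longrightarrow> E b a" using G by (rule simple_graph_sym)
  have A_nbrs: "E t u" if "t \<in> A" for t
  proof -
    have "t \<in> {y\<in>V. E u y}" using that N(1) by blast
    then show ?thesis using sym by simp
  qed
  have one_out: "\<forall>w\<in>X. \<forall>a b. E w a \<longrightarrow> E w b \<longrightarrow> a \<notin> X \<longrightarrow> b \<notin> X \<longrightarrow> a = b"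
  proof (intro ballI allI impI)
    fix w a b assume "w \<in> X" "E w a" "E w b" "a \<notin> X" "b \<notin> X"
    then have "a \<in> {y\<in>V. E w y} - {u}" "b \<in> {y\<in>V. E w y} - {u}"
      using simple_graph_vertices[OF G] by (auto simp: X_def)
    show "a = b"
    proof (cases "w = u")
      case True
      then show ?thesis
        using \<open>a \<in> {y\<in>V. E w y} - {u}\<close> \<open>b \<in> {y\<in>V. E w y} - {u}\<close> N(1) \<open>a \<notin> X\<close> \<open>b \<notin> X\<close>
        by (auto simp: X_def)
    next
      case False
      then have "w \<in> A" using \<open>w \<in> X\<close> by (simp add: X_def)
      then have "deg V E w = 2" using A by blast
      then obtain z where "{y\<in>V. E w y} - {u} = {z}"
        by (rule deg2_other_neighbour[OF G _ A_nbrs[OF \<open>w \<in> A\<close>]])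
      then show ?thesis
        using \<open>a \<in> {y\<in>V. E w y} - {u}\<close> \<open>b \<in> {y\<in>V. E w y} - {u}\<close> by simp
    qed
  qed
  have few_u: "card {y\<in>V - X. sq_adj E u y} < k + 1"
  proof -
    have "card {y\<in>V - X. sq_adj E u y} \<le> deg V E w0 + deg V E u"
      unfolding X_def by (rule card_sq_neighbours_beyond_deg2[OF G N]) (use A in blast)
    then have "real (card {y\<in>V - X. sq_adj E u y}) \<le> real (deg V E w0) + real (deg V E u)"
      by linarith
    then have "real (card {y\<in>V - X. sq_adj E u y}) < real k" using light u(2) by linarith
    then show ?thesis by simp
  qed
  have few_A: "card {y\<in>V. sq_adj E t y} < k + 1" if "t \<in> A" for t
  proof -
    have "real (card {y\<in>V. sq_adj E t y}) \<le> 2 * M"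
      by (rule card_sq_neighbours_deg2[OF G]) (use A that in blast)+
    then have "real (card {y\<in>V. sq_adj E t y}) \<le> real k" using Mk by linarith
    then show ?thesis by simp
  qed
  have "sq_list_colorable V E (k + 1)"
    unfolding sq_list_colorable_iff
  proof (intro allI impI)
    fix L :: "'a \<Rightarrow> nat set"
    assume L: "\<forall>v\<in>V. finite (L v) \<and> card (L v) = k + 1"
    have "u \<in> X" by (simp add: X_def)
    obtain c where c: "sq_list_coloring (V - X) E L c"
      by (rule sq_list_coloring_remainder[OF G minimal \<open>u \<in> X\<close> u(1) one_out L])
    have "finite (V - X)" using simple_graph_finite[OF G] by simp
    moreover have "finite (L u)" "card {y\<in>V - X. sq_adj E u y} < card (L u)"
      using few_u L u(1) by auto
    ultimately obtain col where col: "sq_list_coloring (insert u (V - X)) E L (c(u := col))"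
      using sq_list_coloring_insert[OF sym c] by blast
    have "A \<subseteq> V" "insert u (V - X) \<subseteq> V" using N(1) u(1) by auto
    moreover have "\<forall>t\<in>A. finite (L t) \<and> card {y\<in>V. sq_adj E t y} < card (L t)"
      using few_A L \<open>A \<subseteq> V\<close> by auto
    ultimately obtain c' where "sq_list_coloring (insert u (V - X) \<union> A) E L c'"
      using sq_list_coloring_Un[OF sym simple_graph_finite[OF G] _ _ _ col] by blast
    moreover have "insert u (V - X) \<union> A = V" using \<open>A \<subseteq> V\<close> u(1) by (auto simp: X_def)
    ultimately show "\<exists>c. sq_list_coloring V E L c" by auto
  qed
  with notcol show False by contradiction
qed

lemma V1set_heavy_neighbour:
  assumes G: "simple_graph V E"
    and notcol: "\<not> sq_list_colorable V E (k + 1)"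
    and minimal: "\<forall>V' E'. proper_subgraph V' E' V E \<longrightarrow> sq_list_colorable V' E' (k + 1)"
    and Mk: "2 * M \<le> real k"
    and u: "u \<in> V1set V E M"
  obtains w0 A where "{y\<in>V. E u y} = insert w0 A" "w0 \<notin> A" "real k - M \<le> real (deg V E w0)"
    "\<forall>t\<in>A. deg V E t = 2 \<and> (\<forall>x. E t x \<longrightarrow> real (deg V E x) \<le> M - 1)"
proof -
  obtain w0 A where N: "{y\<in>V. E u y} = insert w0 A" "w0 \<notin> A"
    and A: "\<forall>t\<in>A. deg V E t = 2 \<and> (\<forall>x. E t x \<longrightarrow> real (deg V E x) \<le> M - 1)"
    by (rule V1set_neighbourhood[OF G u])
  have "real k - M \<le> real (deg V E w0)"
    by (rule heavy_neighbour[OF G notcol minimal Mk V1set_vertex[OF u] N A])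
  then show ?thesis by (rule that[OF N _ A])
qed

lemma V1set_stable:
  assumes G: "simple_graph V E"
    and notcol: "\<not> sq_list_colorable V E (k + 1)"
    and minimal: "\<forall>V' E'. proper_subgraph V' E' V E \<longrightarrow> sq_list_colorable V' E' (k + 1)"
    and Mk: "2 * M \<le> real k"
    and u: "u \<in> V1set V E M" and v: "v \<in> V1set V E M"
  shows "\<not> E u v"
proof
  assume "E u v"
  obtain w0 A where N: "{y\<in>V. E u y} = insert w0 A" "w0 \<notin> A"
    and heavy: "real k - M \<le> real (deg V E w0)"
    and A: "\<forall>t\<in>A. deg V E t = 2 \<and> (\<forall>x. E t x \<longrightarrow> real (deg V E x) \<le> M - 1)"
    by (rule V1set_heavy_neighbour[OF G notcol minimal Mk u])
  have "v \<noteq> w0" using V1set_vertex(2)[OF v] heavy Mk by auto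
  moreover have "v \<in> {y\<in>V. E u y}" using \<open>E u v\<close> simple_graph_vertices[OF G] by blast
  ultimately have "v \<in> A" using N(1) by blast
  obtain w1 B where "{y\<in>V. E v y} = insert w1 B" "real k - M \<le> real (deg V E w1)"
    by (rule V1set_heavy_neighbour[OF G notcol minimal Mk v])
  moreover have "real (deg V E w1) \<le> M - 1" if "E v w1"
    using A \<open>v \<in> A\<close> that by blast
  ultimately show False using Mk by force
qed

lemma parameter_bounds:
  fixes \<epsilon> M :: real and k :: nat
  assumes "0 < \<epsilon>" "\<epsilon> \<le> 1/20" and "M = 6 / \<epsilon>" and "real k \<ge> 3 / \<epsilon>^2"
  shows "2 * M \<le> real k" "M + 2 < real k"
proof -
  define t where "t = 1 / \<epsilon>"
  have "t \<ge> 20" using assms(1,2) unfolding t_def by (simp add: field_simps)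
  moreover have "real k \<ge> 3 * t * t" using assms(4) by (simp add: t_def power2_eq_square)
  moreover have "t * t \<ge> 20 * t" using \<open>t \<ge> 20\<close> by (simp add: mult_right_mono)
  moreover have "M = 6 * t" using assms(3) by (simp add: t_def)
  ultimately show "2 * M \<le> real k" "M + 2 < real k" by linarith+
qed

lemma V1set_unique_heavy_neighbour:
  assumes G: "simple_graph V E"
    and notcol: "\<not> sq_list_colorable V E (k + 1)"
    and minimal: "\<forall>V' E'. proper_subgraph V' E' V E \<longrightarrow> sq_list_colorable V' E' (k + 1)"
    and Mk: "2 * M \<le> real k" "M + 2 < real k"
    and u: "u \<in> V1set V E M"
  shows "\<exists>w0. E u w0 \<and> real (deg V E w0) \<ge> real k - M
      \<and> (\<forall>w. E u w \<and> w \<noteq> w0 \<longrightarrow> real (deg V E w) < real k - M \<and> deg V E w = 2)"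
proof -
  obtain w0 A where N: "{y\<in>V. E u y} = insert w0 A" "w0 \<notin> A"
    and w0: "real k - M \<le> real (deg V E w0)"
    and A: "\<forall>t\<in>A. deg V E t = 2 \<and> (\<forall>x. E t x \<longrightarrow> real (deg V E x) \<le> M - 1)"
    by (rule V1set_heavy_neighbour[OF G notcol minimal Mk(1) u])
  have "E u w0" using N(1) by blast
  moreover have "deg V E w = 2" if "E u w" "w \<noteq> w0" for w
    using that N(1) A simple_graph_vertices[OF G] by blast
  ultimately show ?thesis using w0 Mk(2) by force
qed

theorem lemma3:
  fixes V :: "'a set" and E :: "'a \<Rightarrow> 'a \<Rightarrow> bool"
    and \<epsilon> M :: real and k :: nat
  assumes eps: "0 < \<epsilon>" "\<epsilon> \<le> 1/20"
    and M_def: "M = 6 / \<epsilon>"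
    and k_ge: "real k \<ge> 3 / \<epsilon>^2"
    and G: "simple_graph V E"
    and maxdeg: "\<forall>v\<in>V. deg V E v \<le> k"
    and notcol: "\<not> sq_list_colorable V E (k + 1)"
    and minimal: "\<forall>V' E'. proper_subgraph V' E' V E \<longrightarrow> sq_list_colorable V' E' (k + 1)"
  shows "(\<forall>u\<in>V1set V E M.
            (\<exists>w0. E u w0 \<and> real (deg V E w0) \<ge> real k - M
               \<and> (\<forall>w. E u w \<and> w \<noteq> w0 \<longrightarrow>
                      real (deg V E w) < real k - M \<and> deg V E w = 2)))
       \<and> (\<forall>u\<in>V1set V E M. \<forall>v\<in>V1set V E M. \<not> E u v)
       \<and> V1set V E M \<inter> Tset V E M = {}"
proof -
  have Mk: "2 * M \<le> real k" "M + 2 < real k" using parameter_bounds[OF eps M_def k_ge] by auto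
  have heavy: "\<exists>w0. E u w0 \<and> real (deg V E w0) \<ge> real k - M
      \<and> (\<forall>w. E u w \<and> w \<noteq> w0 \<longrightarrow> real (deg V E w) < real k - M \<and> deg V E w = 2)"
    if "u \<in> V1set V E M" for u
    using V1set_unique_heavy_neighbour[OF G notcol minimal Mk that] .
  have stable: "\<not> E u v" if "u \<in> V1set V E M" "v \<in> V1set V E M" for u v
    using V1set_stable[OF G notcol minimal Mk(1) that] .
  have "u \<notin> Tset V E M" if u: "u \<in> V1set V E M" for u
  proof
    assume "u \<in> Tset V E M"
    obtain w0 where "E u w0" using heavy[OF u] by blast
    then have "w0 \<in> V1set V E M" using \<open>u \<in> Tset V E M\<close> by (simp add: Tset_def)
    then show False using stable[OF u] \<open>E u w0\<close> by blast
  qed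
  then show ?thesis using heavy stable by blast
qed

end
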